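(* Let $\triangle ABC$ be a nondegenerate triangle with circumradius $R$, circumscribed about a central conic with linear eccentricity $c$ (half the distance between the foci). (a) If the circumcenter of $\triangle ABC$ coincides with the center of the conic, then $3R^2>c^2$. (b) If the circumcenter of $\triangle ABC$ coincides with a focus of the conic, then $3R>2c$.
   Context: A central conic is a non-degenerate ellipse or hyperbola. A triangle is circumscribed about a conic if each of its three sidelines is tangent to the conic. *)

theory Defs
  imports "HOL-Analysis.Analysis"
begin

text \<open>Points of the Euclidean plane are vectors in real^2.
  A central conic is given by its center Oc, a unit vector u along the
  major (ellipse) resp. transverse (hyperbola) axis, semi-axes a, b > 0,
  and a flag hyp (True = hyperbola, False = ellipse, where then b \<le> a).\<close>

definition perp2 :: "real^2 \<Rightarrow> real^2" where
  "perp2 u = vector [- (u$2), u$1]"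

definition conic_fun :: "real^2 \<Rightarrow> real^2 \<Rightarrow> real \<Rightarrow> real \<Rightarrow> bool \<Rightarrow> real^2 \<Rightarrow> real" where
  "conic_fun Oc u a b hyp P =
     ((P - Oc) \<bullet> u)^2 / a^2 + (if hyp then -1 else 1) * ((P - Oc) \<bullet> perp2 u)^2 / b^2 - 1"

definition central_conic :: "real^2 \<Rightarrow> real \<Rightarrow> real \<Rightarrow> bool \<Rightarrow> bool" where
  "central_conic u a b hyp \<longleftrightarrow> norm u = 1 \<and> 0 < a \<and> 0 < b \<and> (\<not> hyp \<longrightarrow> b \<le> a)"

definition lin_ecc :: "real \<Rightarrow> real \<Rightarrow> bool \<Rightarrow> real" where
  "lin_ecc a b hyp = (if hyp then sqrt (a^2 + b^2) else sqrt (a^2 - b^2))"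

definition foci :: "real^2 \<Rightarrow> real^2 \<Rightarrow> real \<Rightarrow> real \<Rightarrow> bool \<Rightarrow> (real^2) set" where
  "foci Oc u a b hyp = {Oc + lin_ecc a b hyp *\<^sub>R u, Oc - lin_ecc a b hyp *\<^sub>R u}"

definition line_tangent :: "(real^2 \<Rightarrow> real) \<Rightarrow> real^2 \<Rightarrow> real^2 \<Rightarrow> bool" where
  "line_tangent f X Y \<longleftrightarrow>
     (\<exists>t::real. \<exists>D. let P = X + t *\<^sub>R (Y - X) in
        f P = 0 \<and> (f has_derivative D) (at P) \<and> D \<noteq> (\<lambda>_. 0) \<and> D (Y - X) = 0)"

definition circumscribed :: "real^2 \<Rightarrow> real^2 \<Rightarrow> real^2 \<Rightarrow> (real^2 \<Rightarrow> real) \<Rightarrow> bool" where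
  "circumscribed A B C f \<longleftrightarrow> line_tangent f A B \<and> line_tangent f B C \<and> line_tangent f C A"

end

theory Submission
  imports Defs
begin

(* Identify the plane with C through the orthonormal frame of the conic, in which the conic
   is x^2/a^2 + y^2/E = 1 with E = b^2 or E = -b^2, so that c^2 = a^2 - E.

   If the circumcircle |z| = R is centred at the centre of the conic, the tangency of the
   side through p and q, after cancelling |p - q|^2 and using cnj p = R^2/p, becomes a
   symmetric relation F(p, q) = 0 of degree 2 in each variable.  As it holds for every pair of
   the distinct vertices A, B, C, elimination gives R^4 (A + B + C) + c^2 ABC = 0, hence
   c^2 = R |A + B + C| < 3 R^2.

   If the circumcircle is centred at a focus f, the tangency of a side becomes bilinear in
   the vertices (taken relative to the focus), and the three relations force
   A + B + C = -2f: the orthocentre is the other focus.  Hence 2c = |A + B + C| < 3R. *)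

definition frame_coord :: "real^2 \<Rightarrow> real^2 \<Rightarrow> complex" where
  "frame_coord u v = Complex (v \<bullet> u) (v \<bullet> perp2 u)"

lemma frame_coord_diff: "frame_coord u (v - w) = frame_coord u v - frame_coord u w"
  by (simp add: frame_coord_def inner_diff_left complex_eq_iff)

lemma frame_coord_add: "frame_coord u (v + w) = frame_coord u v + frame_coord u w"
  by (simp add: frame_coord_def inner_add_left complex_eq_iff)

lemma frame_coord_scaleR: "frame_coord u (t *\<^sub>R v) = of_real t * frame_coord u v"
  by (simp add: frame_coord_def complex_eq_iff)

lemma frame_coord_0 [simp]: "frame_coord u 0 = 0"
  by (simp add: frame_coord_def complex_eq_iff)

lemma norm_frame_coord:
  assumes "norm u = 1"
  shows "cmod (frame_coord u v) = norm v"
proof -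
  have sq_norm: "(norm w)^2 = w$1^2 + w$2^2" for w :: "real^2"
    unfolding power2_norm_eq_inner by (simp add: inner_vec_def sum_2 power2_eq_square)
  have "(cmod (frame_coord u v))^2 = (v$1^2 + v$2^2) * (u$1^2 + u$2^2)"
    unfolding cmod_power2
    by (simp add: frame_coord_def perp2_def inner_vec_def sum_2 power2_eq_square algebra_simps)
  also have "\<dots> = (norm v)^2"
    using assms sq_norm[of u] sq_norm[of v] by simp
  finally show ?thesis
    by (simp add: power2_eq_iff_nonneg)
qed

lemma dist_frame_coord:
  assumes "norm u = 1"
  shows "cmod (frame_coord u (P - Oc) - frame_coord u (Q - Oc)) = dist P Q"
  by (simp flip: frame_coord_diff add: norm_frame_coord[OF assms] dist_norm)

lemma frame_coord_self:
  assumes "norm u = 1"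
  shows "frame_coord u u = 1"
proof -
  have "u \<bullet> u = 1"
    using assms by (simp add: power2_norm_eq_inner[symmetric])
  then show ?thesis
    by (simp add: frame_coord_def complex_eq_iff perp2_def inner_vec_def sum_2)
qed

definition signed_minor_sq :: "real \<Rightarrow> bool \<Rightarrow> real" where
  "signed_minor_sq b hyp = (if hyp then - (b^2) else b^2)"

lemma lin_ecc_sq:
  assumes "central_conic u a b hyp"
  shows "(lin_ecc a b hyp)^2 = a^2 - signed_minor_sq b hyp"
  using assms by (auto simp: central_conic_def lin_ecc_def signed_minor_sq_def power_mono)

lemma foci_frame_coord:
  assumes "central_conic u a b hyp" "F \<in> foci Oc u a b hyp"
  obtains f where "frame_coord u (F - Oc) = of_real f" "\<bar>f\<bar> = lin_ecc a b hyp"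
    "f^2 = a^2 - signed_minor_sq b hyp"
proof -
  define c where "c = lin_ecc a b hyp"
  have "c \<ge> 0"
    using assms(1) by (auto simp: c_def central_conic_def lin_ecc_def power_mono)
  moreover have "F - Oc = c *\<^sub>R u \<or> F - Oc = (- c) *\<^sub>R u"
    using assms(2) by (auto simp: foci_def c_def)
  ultimately obtain f where "F - Oc = f *\<^sub>R u" and f: "\<bar>f\<bar> = c"
    by (metis abs_minus_cancel abs_of_nonneg)
  moreover have "norm u = 1"
    using assms(1) by (simp add: central_conic_def)
  moreover have "f^2 = a^2 - signed_minor_sq b hyp"
    using f lin_ecc_sq[OF assms(1)] power2_abs[of f] unfolding c_def by simp
  ultimately show ?thesis
    using that by (simp add: c_def frame_coord_scaleR frame_coord_self)
qed

lemma conic_fun_frame_coord: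
  "conic_fun Oc u a b hyp P =
     Re (frame_coord u (P - Oc))^2 / a^2 + Im (frame_coord u (P - Oc))^2 / signed_minor_sq b hyp - 1"
  by (simp add: conic_fun_def frame_coord_def signed_minor_sq_def)

lemma has_derivative_conic_fun:
  fixes Oc u P :: "real^2"
  assumes "a \<noteq> 0" "b \<noteq> 0"
  defines "w \<equiv> frame_coord u (P - Oc)"
  shows "(conic_fun Oc u a b hyp has_derivative
     (\<lambda>h. 2 * Re w * Re (frame_coord u h) / a^2 + 2 * Im w * Im (frame_coord u h) / signed_minor_sq b hyp)) (at P)"
proof -
  have "(conic_fun Oc u a b hyp has_derivative
     (\<lambda>h. 2 * ((P - Oc) \<bullet> u) * (h \<bullet> u) / a^2
          + (if hyp then -1 else 1) * (2 * ((P - Oc) \<bullet> perp2 u) * (h \<bullet> perp2 u)) / b^2)) (at P)"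
    unfolding conic_fun_def[abs_def]
    using assms(1,2) by (auto intro!: derivative_eq_intros simp: field_simps power2_eq_square)
  then show ?thesis
    by (cases hyp) (simp_all add: w_def frame_coord_def signed_minor_sq_def)
qed

lemma conic_tangent_cross_sq:
  fixes a E p1 p2 d1 d2 :: real
  assumes "a \<noteq> 0" "E \<noteq> 0"
    and on_conic: "p1^2 / a^2 + p2^2 / E = 1"
    and tangent: "p1 * d1 / a^2 + p2 * d2 / E = 0"
  shows "(p1 * d2 - p2 * d1)^2 = a^2 * d2^2 + E * d1^2"
proof -
  \<comment> \<open>Lagrange's identity for the quadratic form x^2/a^2 + y^2/E\<close>
  have "(p1^2 / a^2 + p2^2 / E) * (d1^2 / a^2 + d2^2 / E)
      = (p1 * d1 / a^2 + p2 * d2 / E)^2 + (p1 * d2 - p2 * d1)^2 / (a^2 * E)"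
    using assms(1,2) by (simp add: field_simps) algebra
  then have "d1^2 / a^2 + d2^2 / E = (p1 * d2 - p2 * d1)^2 / (a^2 * E)"
    using on_conic tangent by simp
  then show ?thesis
    using assms(1,2) by (simp add: field_simps)
qed

(* The line l x + m y = n touches x^2/a^2 + y^2/E = 1 iff a^2 l^2 + E m^2 = n^2; for the line
   through p and q take (l, m, n) = (Im (q - p), - Re (q - p), Im (cnj p * q)). *)
definition touches_conic :: "real \<Rightarrow> real \<Rightarrow> complex \<Rightarrow> complex \<Rightarrow> bool" where
  "touches_conic a E p q \<longleftrightarrow> Im (cnj p * q)^2 = a^2 * Im (q - p)^2 + E * Re (q - p)^2"

lemma touches_conic_commute: "touches_conic a E p q \<longleftrightarrow> touches_conic a E q p"
proof -
  have "Im (cnj q * p) = - Im (cnj p * q)" "Im (p - q) = - Im (q - p)" "Re (p - q) = - Re (q - p)"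
    by simp_all
  then show ?thesis
    unfolding touches_conic_def by (simp only: power2_minus)
qed

lemma line_tangent_imp_touches_conic:
  assumes "central_conic u a b hyp" and "line_tangent (conic_fun Oc u a b hyp) X Y"
  shows "touches_conic a (signed_minor_sq b hyp) (frame_coord u (X - Oc)) (frame_coord u (Y - Oc))"
proof -
  define E where "E = signed_minor_sq b hyp"
  define p where "p = frame_coord u (X - Oc)"
  define q where "q = frame_coord u (Y - Oc)"
  have a: "a \<noteq> 0" and b: "b \<noteq> 0" and E: "E \<noteq> 0"
    using assms(1) by (auto simp: central_conic_def E_def signed_minor_sq_def)
  obtain t D where on_conic: "conic_fun Oc u a b hyp (X + t *\<^sub>R (Y - X)) = 0"
    and deriv: "(conic_fun Oc u a b hyp has_derivative D) (at (X + t *\<^sub>R (Y - X)))"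
    and tangent: "D (Y - X) = 0"
    using assms(2) unfolding line_tangent_def Let_def by blast
  define w where "w = frame_coord u (X + t *\<^sub>R (Y - X) - Oc)"
  have d: "frame_coord u (Y - X) = q - p"
    unfolding p_def q_def by (simp flip: frame_coord_diff)
  have w: "w = p + of_real t * (q - p)"
  proof -
    have "X + t *\<^sub>R (Y - X) - Oc = (X - Oc) + t *\<^sub>R (Y - X)"
      by (simp add: algebra_simps)
    then show ?thesis
      unfolding w_def by (simp only: frame_coord_add frame_coord_scaleR d p_def[symmetric])
  qed
  have "D = (\<lambda>h. 2 * Re w * Re (frame_coord u h) / a^2 + 2 * Im w * Im (frame_coord u h) / E)"
    using has_derivative_unique[OF deriv has_derivative_conic_fun[OF a b]]
    unfolding w_def E_def .
  then have "Re w * Re (q - p) / a^2 + Im w * Im (q - p) / E = 0"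
    using tangent d by (simp add: add_divide_distrib[symmetric])
  moreover have "Re w^2 / a^2 + Im w^2 / E = 1"
    using on_conic by (simp add: conic_fun_frame_coord w_def E_def)
  ultimately have "(Re w * Im (q - p) - Im w * Re (q - p))^2 = a^2 * Im (q - p)^2 + E * Re (q - p)^2"
    using conic_tangent_cross_sq[OF a E] by blast
  moreover have "Re w * Im (q - p) - Im w * Re (q - p) = Im (cnj p * q)"
    unfolding w by (simp add: algebra_simps)
  ultimately show ?thesis
    unfolding touches_conic_def p_def q_def E_def by simp
qed

lemma circumscribed_imp_touches_conic:
  assumes "central_conic u a b hyp" "circumscribed A B C (conic_fun Oc u a b hyp)"
  defines "E \<equiv> signed_minor_sq b hyp" and "coord \<equiv> \<lambda>P. frame_coord u (P - Oc)"
  shows "touches_conic a E (coord A) (coord B)" "touches_conic a E (coord B) (coord C)"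
    "touches_conic a E (coord C) (coord A)"
  using assms(2) line_tangent_imp_touches_conic[OF assms(1)]
  unfolding circumscribed_def coord_def E_def by blast+

lemma norm_add3_lt_equal_norms:
  fixes X Y Z :: "'a::real_inner"
  assumes "norm X = R" "norm Y = R" "norm Z = R" "X \<noteq> Y"
  shows "norm (X + Y + Z) < 3 * R"
proof -
  have "R > 0"
    using assms by (metis norm_eq_zero norm_ge_zero order_le_less)
  have "norm (X + Y) \<noteq> norm X + norm Y"
  proof
    assume "norm (X + Y) = norm X + norm Y"
    then have "R *\<^sub>R Y = R *\<^sub>R X"
      by (metis assms(1,2) norm_triangle_eq)
    then show False
      using \<open>R > 0\<close> assms(4) by simp
  qed
  then have "norm (X + Y) < 2 * R"
    using assms norm_triangle_ineq[of X Y] by simp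
  then show ?thesis
    using assms norm_triangle_ineq[of "X + Y" Z] by simp
qed

lemma touches_conic_circle_at_center:
  fixes p q :: complex and a E R :: real
  assumes "cmod p = R" "cmod q = R" "p \<noteq> q" "touches_conic a E p q"
  shows "R^2 * Re (p * cnj q) - (a^2 - E) * Re (p * q) = (a^2 + E) * R^2 - R^4"
proof -
  define r where "r = R^2"
  define xp where "xp = Re p"
  define yp where "yp = Im p"
  define xq where "xq = Re q"
  define yq where "yq = Im q"
  define pq where "pq = xp * xq + yp * yq"
  have on_circle: "xp^2 + yp^2 = r" "xq^2 + yq^2 = r"
    using assms(1,2) by (simp_all add: r_def xp_def yp_def xq_def yq_def flip: cmod_power2)
  have "(cmod (p - q))^2 = 2 * (r - pq)"
    using on_circle unfolding cmod_power2 pq_def xp_def yp_def xq_def yq_def by (simp add: power2_diff)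
  moreover have "cmod (p - q) \<noteq> 0"
    using assms(3) by simp
  ultimately have "r - pq \<noteq> 0"
    by force
  moreover have "r * ((xp * yq - yp * xq)^2 - (a^2 * (yq - yp)^2 + E * (xq - xp)^2))
      = (r - pq) * (r * (r + pq) - (a^2 + E) * r - (a^2 - E) * (xp * xq - yp * yq))"
  proof -
    have "r * ((xp * yq - yp * xq)^2 - (a^2 * (yq - yp)^2 + E * (xq - xp)^2))
        - (r - pq) * (r * (r + pq) - (a^2 + E) * r - (a^2 - E) * (xp * xq - yp * yq))
      = (yq^2 * (a^2 - E + r) + xq^2 * r - r * a^2) * (xp^2 + yp^2 - r)
        + (r^2 - r * E + xp^2 * (E - a^2)) * (xq^2 + yq^2 - r)"
      unfolding pq_def by algebra
    then show ?thesis
      using on_circle by simp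
  qed
  moreover have "Im (cnj p * q) = xp * yq - yp * xq" "Im (q - p) = yq - yp" "Re (q - p) = xq - xp"
    "Re (p * q) = xp * xq - yp * yq"
    unfolding xp_def yp_def xq_def yq_def by simp_all
  ultimately have "r * (r + pq) - (a^2 + E) * r - (a^2 - E) * Re (p * q) = 0"
    using assms(4) unfolding touches_conic_def by simp
  then show ?thesis
    unfolding r_def pq_def xp_def yp_def xq_def yq_def
    by (simp add: algebra_simps power2_eq_square power4_eq_xxxx)
qed

lemma circle_chord_relation_polynomial:
  fixes V W :: complex and R C K :: real
  assumes "cmod V = R" "cmod W = R" "R \<noteq> 0"
    and "R^2 * Re (V * cnj W) - C * Re (V * W) = K"
  shows "of_real (R^4) * (V^2 + W^2) - of_real C * (V^2 * W^2 + of_real (R^4)) - 2 * of_real K * V * W = 0"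
proof -
  have V: "V \<noteq> 0" and W: "W \<noteq> 0"
    using assms(1-3) by auto
  have "V * cnj V = of_real (R^2)" "W * cnj W = of_real (R^2)"
    using assms(1,2) complex_norm_square[of V] complex_norm_square[of W] by simp_all
  then have cnj: "cnj V = of_real (R^2) / V" "cnj W = of_real (R^2) / W"
    using V W by (simp_all add: field_simps)
  have re: "of_real (Re z) = (z + cnj z) / 2" for z
    using complex_add_cnj[of z] by simp
  have "of_real K = of_real (R^2) * of_real (Re (V * cnj W)) - of_real C * of_real (Re (V * W))"
    using assms(4) by (metis of_real_diff of_real_mult)
  also have "\<dots> = of_real (R^2) * ((V * cnj W + cnj V * W) / 2) - of_real C * ((V * W + cnj V * cnj W) / 2)"
    unfolding re by simp
  also have "\<dots> = of_real (R^2) * ((V * (of_real (R^2) / W) + (of_real (R^2) / V) * W) / 2)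
      - of_real C * ((V * W + (of_real (R^2) / V) * (of_real (R^2) / W)) / 2)"
    by (simp only: cnj)
  finally have K: "of_real K = \<dots>" .
  show ?thesis
    using V W unfolding K by (simp add: field_simps power2_eq_square power4_eq_xxxx)
qed

lemma symmetric_biquadratic_three_roots:
  fixes s c k X Y Z :: "'a::field"
  defines "F \<equiv> \<lambda>V W. s * (V^2 + W^2) - c * (V^2 * W^2 + s) - 2 * k * V * W"
  assumes "F X Y = 0" "F Y Z = 0" "F X Z = 0" "X \<noteq> Y" "Y \<noteq> Z" "X \<noteq> Z"
  shows "s * (X + Y + Z) + c * (X * Y * Z) = 0"
proof -
  \<comment> \<open>F X Y - F Z Y is divisible by X - Z; eliminating twice leaves the claim.\<close>
  define G where "G = (\<lambda>V W U. (s - c * U^2) * (V + W) - 2 * k * U)"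
  have "F X Y - F Z Y = (X - Z) * G X Z Y" unfolding F_def G_def by algebra
  moreover have "F X Y = F Z Y" using assms(2,3) unfolding F_def by algebra
  ultimately have GY: "G X Z Y = 0" using assms(7) by simp
  have "F Y X - F Z X = (Y - Z) * G Y Z X" unfolding F_def G_def by algebra
  moreover have "F Y X = F Z X" using assms(2,4) unfolding F_def by algebra
  ultimately have GX: "G Y Z X = 0" using assms(6) by simp
  define L where "L = s + c * (X * Y + Y * Z + Z * X) + 2 * k"
  have "G X Z Y - G Y Z X = (X - Y) * L" unfolding G_def L_def by algebra
  then have "L = 0" using GX GY assms(5) by simp
  moreover have "G X Z Y = s * (X + Y + Z) + c * (X * Y * Z) - Y * L" unfolding G_def L_def by algebra
  ultimately show ?thesis using GY by simp
qed

lemma circumradius_bound_at_center: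
  fixes X Y Z :: complex and a E R :: real
  assumes "cmod X = R" "cmod Y = R" "cmod Z = R" "X \<noteq> Y" "Y \<noteq> Z" "Z \<noteq> X"
    and "touches_conic a E X Y" "touches_conic a E Y Z" "touches_conic a E Z X"
  shows "a^2 - E < 3 * R^2"
proof -
  define C where "C = a^2 - E"
  define K where "K = (a^2 + E) * R^2 - R^4"
  have R: "R > 0"
    using assms(1,2,4) by (metis norm_eq_zero norm_ge_zero order_le_less)
  have "R^2 * Re (X * cnj Y) - C * Re (X * Y) = K"
    using touches_conic_circle_at_center[OF assms(1,2,4,7)] unfolding C_def K_def .
  note XY = circle_chord_relation_polynomial[OF assms(1,2) _ this]
  have "R^2 * Re (Y * cnj Z) - C * Re (Y * Z) = K"
    using touches_conic_circle_at_center[OF assms(2,3,5,8)] unfolding C_def K_def .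
  note YZ = circle_chord_relation_polynomial[OF assms(2,3) _ this]
  have "R^2 * Re (X * cnj Z) - C * Re (X * Z) = K"
    using touches_conic_circle_at_center[OF assms(1,3) assms(6)[symmetric]] assms(9)
    unfolding C_def K_def touches_conic_commute[of a E Z] by blast
  note XZ = circle_chord_relation_polynomial[OF assms(1,3) _ this]
  have "of_real (R^4) * (X + Y + Z) + of_real C * (X * Y * Z) = 0"
    by (rule symmetric_biquadratic_three_roots[where k = "of_real K"])
      (use XY YZ XZ R assms(4-6) in auto)
  then have "cmod (of_real (R^4) * (X + Y + Z)) = cmod (of_real C * (X * Y * Z))"
    by (metis add_eq_0_iff norm_minus_cancel)
  then have "R * (R^3 * cmod (X + Y + Z)) = R^3 * \<bar>C\<bar>"
    using R assms(1-3) by (simp add: norm_mult power3_eq_cube power4_eq_xxxx)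
  then have "R * cmod (X + Y + Z) = \<bar>C\<bar>"
    using R by simp
  moreover have "R * cmod (X + Y + Z) < 3 * R^2"
    using norm_add3_lt_equal_norms[OF assms(1-4)] R by (simp add: power2_eq_square)
  ultimately show ?thesis
    unfolding C_def by linarith
qed

lemma touches_conic_circle_at_focus:
  fixes p q :: complex and a E R f :: real
  assumes "f^2 = a^2 - E" "cmod (p - of_real f) = R" "cmod (q - of_real f) = R" "p \<noteq> q"
    and "touches_conic a E p q"
  shows "Re ((p - of_real f) * cnj (q - of_real f)) + 2 * f * Re ((p - of_real f) + (q - of_real f))
    = 2 * E - R^2"
proof -
  define r where "r = R^2"
  define xp where "xp = Re p - f"
  define yp where "yp = Im p"
  define xq where "xq = Re q - f"
  define yq where "yq = Im q"
  define vw where "vw = xp * xq + yp * yq"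
  have on_circle: "xp^2 + yp^2 = r" "xq^2 + yq^2 = r"
    using assms(2,3) cmod_power2[of "p - of_real f"] cmod_power2[of "q - of_real f"]
    by (simp_all add: r_def xp_def yp_def xq_def yq_def)
  have "(cmod (p - q))^2 = (xp - xq)^2 + (yp - yq)^2"
    unfolding cmod_power2 xp_def yp_def xq_def yq_def by simp
  also have "\<dots> = 2 * (r - vw)"
    using on_circle unfolding vw_def by (simp add: power2_diff algebra_simps)
  finally have "(cmod (p - q))^2 = 2 * (r - vw)" .
  moreover have "cmod (p - q) \<noteq> 0"
    using assms(4) by simp
  ultimately have "r - vw \<noteq> 0"
    by force
  moreover have "((xp + f) * yq - (xq + f) * yp)^2 - (a^2 * (yq - yp)^2 + E * (xq - xp)^2)
      = (r - vw) * (r + vw + 2 * f * (xp + xq) - 2 * E)"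
  proof -
    have "((xp + f) * yq - (xq + f) * yp)^2 - (a^2 * (yq - yp)^2 + E * (xq - xp)^2)
        - (r - (xp * xq + yp * yq)) * (r + (xp * xq + yp * yq) + 2 * f * (xp + xq) - 2 * E)
      = (f^2 - a^2 + yq^2 + 2 * xq * f + xq^2) * (xp^2 + yp^2 - r)
        + (f^2 - a^2 + r + 2 * xp * f) * (xq^2 + yq^2 - r)
        + (2 * r - xq^2 - 2 * yp * yq - xp^2) * (f^2 - a^2 + E)"
      by algebra
    then show ?thesis
      using on_circle assms(1) unfolding vw_def by simp
  qed
  moreover have "Im (cnj p * q) = (xp + f) * yq - (xq + f) * yp"
    "Im (q - p) = yq - yp" "Re (q - p) = xq - xp"
    unfolding xp_def yp_def xq_def yq_def by simp_all
  ultimately have "r + vw + 2 * f * (xp + xq) - 2 * E = 0"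
    using assms(5) unfolding touches_conic_def by simp
  then show ?thesis
    unfolding r_def vw_def xp_def yp_def xq_def yq_def by simp
qed

lemma orthogonal_to_two_chords_eq_0:
  fixes X Y Z H :: complex
  assumes "cmod X = R" "cmod Y = R" "cmod Z = R" "X \<noteq> Y" "Z \<noteq> Y" "X \<noteq> Z"
    and "Re ((X - Y) * cnj H) = 0" "Re ((Z - Y) * cnj H) = 0"
  shows "H = 0"
proof -
  have R: "R \<noteq> 0"
    using assms(1,2,4) by auto
  have nz: "V \<noteq> 0" if "cmod V = R" for V
    using that R by auto
  have cnj: "cnj V = of_real (R^2) / V" if "cmod V = R" for V
  proof -
    have "V * cnj V = of_real (R^2)"
      using that complex_norm_square[of V] by simp
    then show ?thesis
      using nz[OF that] by (simp add: field_simps)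
  qed
  have conj_H: "cnj H = of_real (R^2) * H / (V * Y)"
    if "cmod V = R" "V \<noteq> Y" "Re ((V - Y) * cnj H) = 0" for V
  proof -
    have "(V - Y) * cnj H + cnj (V - Y) * H = 0"
      using that(3) complex_add_cnj[of "(V - Y) * cnj H"] by simp
    then have "(V - Y) * (cnj H - of_real (R^2) * H / (V * Y)) = 0"
      using that(1) assms(2) nz[OF that(1)] nz[OF assms(2)] by (simp add: cnj field_simps)
    then show ?thesis
      using that(2) by simp
  qed
  have "of_real (R^2) * H / (X * Y) = of_real (R^2) * H / (Z * Y)"
    using conj_H[OF assms(1,4,7)] conj_H[OF assms(3,5,8)] by (simp only:)
  then have "of_real (R^2) * H * Y * (X - Z) = 0"
    using nz[OF assms(1)] nz[OF assms(2)] nz[OF assms(3)] by (simp add: field_simps)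
  then show ?thesis
    using R nz[OF assms(2)] assms(6) by simp
qed

lemma vertex_sum_eq_focus:
  fixes X Y Z :: complex and a E R f :: real
  assumes "f^2 = a^2 - E"
    and "cmod (X - of_real f) = R" "cmod (Y - of_real f) = R" "cmod (Z - of_real f) = R"
    and "X \<noteq> Y" "Y \<noteq> Z" "Z \<noteq> X"
    and "touches_conic a E X Y" "touches_conic a E Y Z" "touches_conic a E Z X"
  shows "X + Y + Z = of_real f"
proof -
  define X' where "X' = X - of_real f"
  define Y' where "Y' = Y - of_real f"
  define Z' where "Z' = Z - of_real f"
  define H where "H = X' + Y' + Z' + of_real (2 * f)"
  have centered: "cmod X' = R" "cmod Y' = R" "cmod Z' = R"
    using assms(2-4) unfolding X'_def Y'_def Z'_def by simp_all
  have XZ: "Re (X' * cnj Z') + 2 * f * Re (X' + Z') = 2 * E - R^2"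
    using touches_conic_circle_at_focus[OF assms(1,2,4) assms(7)[symmetric]] assms(10)
    unfolding X'_def Z'_def touches_conic_commute[of a E Z] by blast
  have ZX: "Re (Z' * cnj X') + 2 * f * Re (Z' + X') = 2 * E - R^2"
    using touches_conic_circle_at_focus[OF assms(1,4,2,7,10)] unfolding X'_def Z'_def .
  have YZ: "Re (Y' * cnj Z') + 2 * f * Re (Y' + Z') = 2 * E - R^2"
    using touches_conic_circle_at_focus[OF assms(1,3,4,6,9)] unfolding Y'_def Z'_def .
  have YX: "Re (Y' * cnj X') + 2 * f * Re (Y' + X') = 2 * E - R^2"
    using touches_conic_circle_at_focus[OF assms(1,3,2) assms(5)[symmetric]] assms(8)
    unfolding X'_def Y'_def touches_conic_commute[of a E X] by blast
  have expand: "Re ((V - W) * cnj (V + W + U + of_real (2 * f)))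
      = (cmod V)^2 - (cmod W)^2 + (Re (V * cnj U) + 2 * f * Re (V + U)) - (Re (W * cnj U) + 2 * f * Re (W + U))"
    for V W U :: complex
    unfolding cmod_power2 by (simp add: algebra_simps power2_eq_square)
  have "Re ((X' - Y') * cnj H) = 0"
    using expand[of X' Y' Z'] XZ YZ centered unfolding H_def by simp
  moreover have "Re ((Z' - Y') * cnj H) = 0"
  proof -
    have "H = Z' + Y' + X' + of_real (2 * f)"
      unfolding H_def by (simp add: algebra_simps)
    then show ?thesis
      using expand[of Z' Y' X'] ZX YX centered by simp
  qed
  ultimately have "H = 0"
    using orthogonal_to_two_chords_eq_0[OF centered] assms(5-7)
    unfolding X'_def Y'_def Z'_def by auto
  moreover have "X + Y + Z - of_real f = H"
    unfolding H_def X'_def Y'_def Z'_def by (simp add: algebra_simps)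
  ultimately show ?thesis
    by simp
qed

lemma circumradius_bound_at_focus:
  fixes X Y Z :: complex and a E R f :: real
  assumes "f^2 = a^2 - E"
    and "cmod (X - of_real f) = R" "cmod (Y - of_real f) = R" "cmod (Z - of_real f) = R"
    and "X \<noteq> Y" "Y \<noteq> Z" "Z \<noteq> X"
    and "touches_conic a E X Y" "touches_conic a E Y Z" "touches_conic a E Z X"
  shows "2 * \<bar>f\<bar> < 3 * R"
proof -
  have "(X - of_real f) + (Y - of_real f) + (Z - of_real f) = - of_real (2 * f)"
    using vertex_sum_eq_focus[OF assms] by (simp add: algebra_simps)
  moreover have "cmod ((X - of_real f) + (Y - of_real f) + (Z - of_real f)) < 3 * R"
    using norm_add3_lt_equal_norms[OF assms(2-4)] assms(5) by simp
  ultimately show ?thesis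
    by simp
qed

theorem lemma2p1:
  fixes A B C Z Oc u :: "real^2" and R a b :: real and hyp :: bool
  assumes "\<not> collinear {A, B, C}"
    and "dist Z A = R" and "dist Z B = R" and "dist Z C = R"
    and "central_conic u a b hyp"
    and "circumscribed A B C (conic_fun Oc u a b hyp)"
  shows "(Z = Oc \<longrightarrow> 3 * R^2 > (lin_ecc a b hyp)^2)
       \<and> (Z \<in> foci Oc u a b hyp \<longrightarrow> 3 * R > 2 * lin_ecc a b hyp)"
proof -
  define coord where "coord P = frame_coord u (P - Oc)" for P
  have dist_coord: "cmod (coord P - coord Q) = dist P Q" for P Q
    using assms(5) unfolding coord_def central_conic_def by (simp add: dist_frame_coord)
  have on_circle: "cmod (coord A - coord Z) = R" "cmod (coord B - coord Z) = R"
    "cmod (coord C - coord Z) = R"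
    using assms(2-4) by (simp_all add: dist_coord dist_commute)
  have "A \<noteq> B" "B \<noteq> C" "C \<noteq> A"
    using assms(1) by (auto simp: collinear_2 insert_commute)
  then have distinct: "coord A \<noteq> coord B" "coord B \<noteq> coord C" "coord C \<noteq> coord A"
    by (metis dist_coord dist_eq_0_iff norm_zero right_minus_eq)+
  note touches = circumscribed_imp_touches_conic[OF assms(5,6), folded coord_def]
  have "3 * R^2 > (lin_ecc a b hyp)^2" if "Z = Oc"
  proof -
    have "coord Z = 0"
      using that by (simp add: coord_def)
    then show ?thesis
      using circumradius_bound_at_center[OF _ _ _ distinct touches] on_circle
      by (simp add: lin_ecc_sq[OF assms(5)])
  qed
  moreover have "3 * R > 2 * lin_ecc a b hyp" if focus: "Z \<in> foci Oc u a b hyp"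
  proof -
    obtain f where "coord Z = of_real f" "\<bar>f\<bar> = lin_ecc a b hyp"
      "f^2 = a^2 - signed_minor_sq b hyp"
      using foci_frame_coord[OF assms(5) focus] unfolding coord_def by blast
    then show ?thesis
      using circumradius_bound_at_focus[OF _ _ _ _ distinct touches] on_circle by metis
  qed
  ultimately show ?thesis
    by blast
qed

end
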